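(* Let $\Omega$ be a finite set of skills over a state space $\mathcal{S}$, where each $\omega\in\Omega$ has a true initiation set $I_\omega\subseteq\mathcal{S}$ and termination set $\beta_\omega\subseteq\mathcal{S}$, and let $\mathcal{M}^*$ be a complete model for $\Omega$ realizing exactly these sets. Let $\mu$ be a probability distribution over $\mathcal{S}\times\Omega\times\mathcal{S}$. Let $\mathcal{H}$ be a finite hypothesis class of models, each $\mathcal{M}=(\mathcal{P},\mathcal{A})\in\mathcal{H}$ assigning to every $\omega\in\Omega$ a learned initiation set $\widehat I_\omega=\bigcup_{a\in\mathcal{A}_\omega}\mathcal{G}(\mathrm{Pre}_a)$ and learned termination set $\widehat\beta_\omega=\bigcup_{a\in\mathcal{A}_\omega}\big(\mathcal{G}(\mathrm{Pre}_a)\setminus\mathcal{G}(\mathrm{Eff}^-_a)\big)\cup\mathcal{G}(\mathrm{Eff}^+_a)$. For $\mathcal{M}\in\mathcal{H}$ define \[d_{\mathrm{compl}}(\mathcal{M},\mathcal{M}^* )=\Pr_{(s,\omega,s')\sim\mu}\big[(s\in\widehat I_\omega\,\triangle\, I_\omega)\vee(s'\in\widehat\beta_\omega\,\triangle\,\beta_\omega)\big].\] Let $n$ i.i.d. samples $(s_i,\omega_i,s_i')_{i=1}^n$ be drawn from $\mu$, and let $\widehat{\mathcal{M}}_n\in\mathcal{H}$ be the model learned by SkillWrapper from them, which is consistent with every sample, i.e. for all $i$: $s_i\notin\widehat I_{\omega_i}\triangle I_{\omega_i}$ and $s_i'\notin\widehat\beta_{\omega_i}\triangle\beta_{\omega_i}$.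 Then for every $\epsilon>0$, \[\Pr\big[d_{\mathrm{compl}}(\widehat{\mathcal{M}}_n,\mathcal{M}^* )\le\epsilon\big]\ge 1-|\mathcal{H}|\,e^{-n\epsilon}.\]
   Context: A model $\mathcal{M}=(\mathcal{P},\mathcal{A})$ consists of a set of predicates $\mathcal{P}$ and a set of operators $\mathcal{A}=\bigcup_{\omega}\mathcal{A}_\omega$, where $\mathcal{A}_\omega$ are the operators associated with skill $\omega$; each operator $a$ has a precondition set $\mathrm{Pre}_a$ and add/delete effect sets $\mathrm{Eff}^+_a,\mathrm{Eff}^-_a$ of predicates. The grounding function $\mathcal{G}$ maps a set of predicates to the set of low-level states in which all those predicates hold. $\triangle$ denotes symmetric difference. *)

theory Defs
  imports "HOL-Probability.Probability"
begin

record ('p, 'w) operator =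
  op_skill :: 'w
  op_pre :: "'p set"
  op_eff_add :: "'p set"
  op_eff_del :: "'p set"

text \<open>A model (P, A): a set of predicates and a set of operators; A_omega are the
operators associated with skill omega.\<close>
type_synonym ('p, 'w) model = "'p set \<times> ('p, 'w) operator set"

definition ops_of :: "('p, 'w) model \<Rightarrow> 'w \<Rightarrow> ('p, 'w) operator set" where
  "ops_of M w = {a \<in> snd M. op_skill a = w}"

text \<open>G is the grounding function: a set of predicates to the set of low-level
states in which all of them hold.\<close>
definition learned_init :: "('p set \<Rightarrow> 's set) \<Rightarrow> ('p, 'w) model \<Rightarrow> 'w \<Rightarrow> 's set" where
  "learned_init G M w = (\<Union>a\<in>ops_of M w. G (op_pre a))"

definition learned_term :: "('p set \<Rightarrow> 's set) \<Rightarrow> ('p, 'w) model \<Rightarrow> 'w \<Rightarrow> 's set" where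
  "learned_term G M w =
     (\<Union>a\<in>ops_of M w. (G (op_pre a) - G (op_eff_del a)) \<union> G (op_eff_add a))"

definition symdiff :: "'a set \<Rightarrow> 'a set \<Rightarrow> 'a set" where
  "symdiff A B = (A - B) \<union> (B - A)"

definition compl_err ::
  "('p set \<Rightarrow> 's set) \<Rightarrow> ('w \<Rightarrow> 's set) \<Rightarrow> ('w \<Rightarrow> 's set) \<Rightarrow> ('p, 'w) model
     \<Rightarrow> 's \<times> 'w \<times> 's \<Rightarrow> bool" where
  "compl_err G I \<beta> M x = (case x of (s, w, s') \<Rightarrow>
      s \<in> symdiff (learned_init G M w) (I w) \<or> s' \<in> symdiff (learned_term G M w) (\<beta> w))"

definition d_compl ::
  "('s \<times> 'w \<times> 's) measure \<Rightarrow> ('p set \<Rightarrow> 's set) \<Rightarrow> ('w \<Rightarrow> 's set) \<Rightarrow> ('w \<Rightarrow> 's set)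
     \<Rightarrow> ('p, 'w) model \<Rightarrow> real" where
  "d_compl \<mu> G I \<beta> M = measure \<mu> {x \<in> space \<mu>. compl_err G I \<beta> M x}"

end

theory Submission
  imports Defs
begin

text \<open>A model whose error probability \<open>d\<close> exceeds \<open>\<epsilon>\<close> is consistent with \<open>n\<close> i.i.d. samples
  with probability \<open>(1 - d)\<^sup>n \<le> e\<^sup>-\<^sup>n\<^sup>\<epsilon>\<close>; a union bound over the at most \<open>|H|\<close> such models
  bounds the probability that a consistent learner returns one of them.\<close>

lemma prob_PiM_all_avoid:
  assumes "prob_space \<mu>" and "E \<in> sets \<mu>"
  shows "measure (PiM {..<n} (\<lambda>_. \<mu>)) {xs \<in> space (PiM {..<n} (\<lambda>_. \<mu>)). \<forall>i<n. xs i \<notin> E}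
     = (1 - measure \<mu> E) ^ n"
proof -
  interpret prob_space \<mu> by fact
  interpret product_sigma_finite "\<lambda>_::nat. \<mu>" by unfold_locales
  have avoid_eq: "{xs \<in> space (PiM {..<n} (\<lambda>_. \<mu>)). \<forall>i<n. xs i \<notin> E} = (\<Pi>\<^sub>E i\<in>{..<n}. space \<mu> - E)"
    by (auto simp: space_PiM PiE_iff extensional_def)
  have "emeasure (PiM {..<n} (\<lambda>_. \<mu>)) (\<Pi>\<^sub>E i\<in>{..<n}. space \<mu> - E) = (\<Prod>i<n. emeasure \<mu> (space \<mu> - E))"
    using assms(2) by (subst emeasure_PiM) auto
  also have "\<dots> = ennreal ((1 - measure \<mu> E) ^ n)"
    using assms(2) by (simp add: emeasure_eq_measure prob_compl prod_ennreal ennreal_power)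
  finally show ?thesis
    using prob_le_1[of E] unfolding avoid_eq measure_def[of "PiM {..<n} (\<lambda>_. \<mu>)"] by simp
qed

lemma one_minus_power_le_exp:
  fixes p e :: real
  assumes "e \<le> p" and "p \<le> 1"
  shows "(1 - p) ^ n \<le> exp (- real n * e)"
proof -
  have "(1 - p) ^ n \<le> exp (- p) ^ n"
    using assms exp_ge_add_one_self[of "-p"] by (intro power_mono) auto
  also have "\<dots> = exp (- real n * p)" by (simp add: exp_of_nat_mult[symmetric])
  also have "\<dots> \<le> exp (- real n * e)" using assms by (simp add: mult_left_mono)
  finally show ?thesis .
qed

lemma prob_PiM_all_avoid_le_exp:
  assumes "prob_space \<mu>" and "E \<in> sets \<mu>" and "\<epsilon> \<le> measure \<mu> E"
  shows "measure (PiM {..<n} (\<lambda>_. \<mu>)) {xs \<in> space (PiM {..<n} (\<lambda>_. \<mu>)). \<forall>i<n. xs i \<notin> E}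
     \<le> exp (- real n * \<epsilon>)"
  unfolding prob_PiM_all_avoid[OF assms(1,2)]
  using assms prob_space.prob_le_1 by (intro one_minus_power_le_exp) auto

theorem prob_consistent_learner_small_error:
  fixes err :: "'h \<Rightarrow> 'a \<Rightarrow> bool" and learner :: "(nat \<Rightarrow> 'a) \<Rightarrow> 'h"
  assumes "prob_space \<mu>" and "finite H" and "0 \<le> \<epsilon>"
    and learner_meas: "learner \<in> measurable (PiM {..<n} (\<lambda>_. \<mu>)) (count_space H)"
    and consistent: "\<And>xs i. xs \<in> space (PiM {..<n} (\<lambda>_. \<mu>)) \<Longrightarrow> i < n \<Longrightarrow> \<not> err (learner xs) (xs i)"
  shows "measure (PiM {..<n} (\<lambda>_. \<mu>))
           {xs \<in> space (PiM {..<n} (\<lambda>_. \<mu>)). measure \<mu> {x \<in> space \<mu>. err (learner xs) x} \<le> \<epsilon>}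
         \<ge> 1 - real (card H) * exp (- real n * \<epsilon>)"
proof -
  let ?P = "PiM {..<n} (\<lambda>_. \<mu>)"
  interpret P: prob_space ?P using assms(1) by (intro prob_space_PiM)
  define E where "E h = {x \<in> space \<mu>. err h x}" for h
  define bad where "bad = {h \<in> H. measure \<mu> (E h) > \<epsilon>}"
  define consistent_with where "consistent_with h = {xs \<in> space ?P. \<forall>i<n. xs i \<notin> E h}" for h
  define good where "good = {xs \<in> space ?P. measure \<mu> (E (learner xs)) \<le> \<epsilon>}"
  have learner_in_H: "learner xs \<in> H" if "xs \<in> space ?P" for xs
    using measurable_space[OF learner_meas that] by simp
  \<comment> \<open>non-measurable sets have measure 0, so the error event of a bad model is measurable\<close>
  have E_sets: "E h \<in> sets \<mu>" if "h \<in> bad" for h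
    using that assms(3) measure_notin_sets[of "E h" \<mu>] by (force simp: bad_def)
  have consistent_with_sets: "consistent_with h \<in> sets ?P" if "h \<in> bad" for h
  proof -
    have "consistent_with h = (\<Pi>\<^sub>E i\<in>{..<n}. space \<mu> - E h)"
      by (auto simp: consistent_with_def space_PiM PiE_iff extensional_def)
    then show ?thesis using E_sets[OF that] by (auto intro!: sets_PiM_I_finite)
  qed
  have good_sets: "good \<in> sets ?P"
  proof -
    have "good = learner -` {h \<in> H. measure \<mu> (E h) \<le> \<epsilon>} \<inter> space ?P"
      using learner_in_H by (auto simp: good_def)
    also have "\<dots> \<in> sets ?P" by (rule measurable_sets[OF learner_meas]) auto
    finally show ?thesis .
  qed
  have not_good_subset: "space ?P - good \<subseteq> (\<Union>h\<in>bad. consistent_with h)"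
  proof
    fix xs assume xs: "xs \<in> space ?P - good"
    then have "learner xs \<in> bad" using learner_in_H by (auto simp: bad_def good_def)
    moreover have "xs \<in> consistent_with (learner xs)"
      using xs consistent by (auto simp: consistent_with_def E_def)
    ultimately show "xs \<in> (\<Union>h\<in>bad. consistent_with h)" by blast
  qed
  have "P.prob (space ?P - good) \<le> P.prob (\<Union>h\<in>bad. consistent_with h)"
    using not_good_subset consistent_with_sets assms(2) by (intro P.finite_measure_mono) (auto simp: bad_def)
  also have "\<dots> \<le> (\<Sum>h\<in>bad. P.prob (consistent_with h))"
    using consistent_with_sets assms(2) by (intro measure_UNION_le) (auto simp: bad_def)
  also have "\<dots> \<le> (\<Sum>h\<in>bad. exp (- real n * \<epsilon>))"
    using E_sets assms(1) unfolding consistent_with_def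
    by (intro sum_mono prob_PiM_all_avoid_le_exp) (auto simp: bad_def)
  also have "\<dots> \<le> real (card H) * exp (- real n * \<epsilon>)"
    using assms(2) by (auto simp: bad_def intro!: mult_right_mono card_mono)
  finally show ?thesis
    using P.prob_compl[OF good_sets] by (simp add: good_def E_def)
qed

theorem mainTheorem2:
  fixes \<mu> :: "('s \<times> 'w::finite \<times> 's) measure"
    and G :: "'p set \<Rightarrow> 's set"
    and I \<beta> :: "'w \<Rightarrow> 's set"
    and Mstar :: "('p, 'w) model"
    and H :: "('p, 'w) model set"
    and n :: nat
    and learner :: "(nat \<Rightarrow> 's \<times> 'w \<times> 's) \<Rightarrow> ('p, 'w) model"
    and \<epsilon> :: real
  assumes "prob_space \<mu>"
    and "\<forall>w. learned_init G Mstar w = I w \<and> learned_term G Mstar w = \<beta> w"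
    and "finite H"
    and "learner \<in> measurable (PiM {..<n} (\<lambda>_. \<mu>)) (count_space H)"
    and "\<forall>xs\<in>space (PiM {..<n} (\<lambda>_. \<mu>)). learner xs \<in> H \<and>
           (\<forall>i<n. fst (xs i) \<notin> symdiff (learned_init G (learner xs) (fst (snd (xs i)))) (I (fst (snd (xs i))))
                 \<and> snd (snd (xs i)) \<notin> symdiff (learned_term G (learner xs) (fst (snd (xs i)))) (\<beta> (fst (snd (xs i)))))"
    and "\<epsilon> > 0"
  shows "measure (PiM {..<n} (\<lambda>_. \<mu>))
           {xs \<in> space (PiM {..<n} (\<lambda>_. \<mu>)). d_compl \<mu> G I \<beta> (learner xs) \<le> \<epsilon>}
         \<ge> 1 - real (card H) * exp (- real n * \<epsilon>)"
proof -
  have "\<not> compl_err G I \<beta> (learner xs) (xs i)"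
    if "xs \<in> space (PiM {..<n} (\<lambda>_. \<mu>))" and "i < n" for xs i
    using conjunct2[OF bspec[OF assms(5) that(1)]] that(2)
    by (cases "xs i") (auto simp: compl_err_def)
  from prob_consistent_learner_small_error[of \<mu> H \<epsilon> learner n "compl_err G I \<beta>", OF _ _ _ _ this]
  show ?thesis using assms(1,3,4,6) by (simp add: d_compl_def)
qed

end
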